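(* Let $\mathbf{I}$ be a $d$-system of ideals in a ring $R$, $A:=\mathscr{A}(R,\mathbf{I})$, and $T_j:=\bigoplus_{i=1}^d\mathbb{T}_{ij}$ for $1\le j\le d$. Then, as left $A$-modules, $T_j\cong Ae_1/(Af_{d+1-j}Ae_1)=(A/J_{d+1-j})e_1$ for all $1\le j\le d$.
   Context: A $d$-system of ideals in $R$ is a collection $\{I_{ij}\mid1\le i,j\le d+1\}$ of two-sided ideals with $I_{ij}I_{jk}\subset I_{ik}$ and $I_{ij}=R$ for $i\ge j$. $\mathscr{A}(R,\mathbf{I}):=\bigoplus_{1\le i,j\le d}X_{ij}$, $X_{ij}:=I_{ij}/I_{i,d+1}$, with multiplication $(x+I_{i,d+1})(y+I_{k,d+1})=\delta_{jk}(xy+I_{i,d+1})\in X_{il}$ for $x\in I_{ij},y\in I_{kl}$. Put $e_k:=1+I_{k,d+1}\in X_{kk}$, $f_j:=\sum_{k>j}e_k$ for $0\le j\le d$ ($f_d=0$), $J_j:=Af_jA$. Define $\mathbb{T}_{kl}:=R/I_{k,d+2-l}$ for $1\le k,l\le d$, with $A$ acting on $\bigoplus_{k}\mathbb{T}_{kl}$ by $(x+I_{i,d+1})\cdot(r+I_{k,d+2-l})=\delta_{jk}(xr+I_{i,d+2-l})\in\mathbb{T}_{il}$ for $x\in I_{ij}$, $r\in R$. *)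

theory Defs
  imports Main
begin

text \<open>The ring R is the whole carrier of a type of class ring with unit
  (not required to be nontrivial). Ideals are subsets of that type.\<close>

definition two_sided_ideal :: "'a::{ring,monoid_mult} set \<Rightarrow> bool" where
  "two_sided_ideal J \<longleftrightarrow> 0 \<in> J \<and> (\<forall>x\<in>J. \<forall>y\<in>J. x + y \<in> J) \<and> (\<forall>x\<in>J. - x \<in> J)
     \<and> (\<forall>x\<in>J. \<forall>r. r * x \<in> J \<and> x * r \<in> J)"

text \<open>A d-system of ideals, indices 1..d+1.  The condition I_ij I_jk \<subseteq> I_ik
  is written elementwise (equivalent to containment of the product ideal).\<close>
definition d_system :: "nat \<Rightarrow> (nat \<Rightarrow> nat \<Rightarrow> 'a::{ring,monoid_mult} set) \<Rightarrow> bool" where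
  "d_system d I \<longleftrightarrow>
     (\<forall>i j. 1 \<le> i \<and> i \<le> d + 1 \<and> 1 \<le> j \<and> j \<le> d + 1 \<longrightarrow> two_sided_ideal (I i j))
   \<and> (\<forall>i j k. 1 \<le> i \<and> i \<le> d + 1 \<and> 1 \<le> j \<and> j \<le> d + 1 \<and> 1 \<le> k \<and> k \<le> d + 1 \<longrightarrow>
        (\<forall>x\<in>I i j. \<forall>y\<in>I j k. x * y \<in> I i k))
   \<and> (\<forall>i j. 1 \<le> i \<and> i \<le> d + 1 \<and> 1 \<le> j \<and> j \<le> d + 1 \<and> j \<le> i \<longrightarrow> I i j = UNIV)"

definition cos :: "'a::plus set \<Rightarrow> 'a \<Rightarrow> 'a set" where
  "cos S x = (\<lambda>s. x + s) ` S"

definition rep :: "'b set \<Rightarrow> 'b" where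
  "rep S = (SOME x. x \<in> S)"

definition inr :: "nat \<Rightarrow> nat \<Rightarrow> nat \<Rightarrow> bool" where
  "inr d i j \<longleftrightarrow> 1 \<le> i \<and> i \<le> d \<and> 1 \<le> j \<and> j \<le> d"

subsection \<open>The algebra A = A(R,I): d x d arrays, entry (i,j) in X_ij = I_ij / I_{i,d+1}\<close>

definition clsA :: "nat \<Rightarrow> (nat \<Rightarrow> nat \<Rightarrow> 'a::{ring,monoid_mult} set) \<Rightarrow> (nat \<Rightarrow> nat \<Rightarrow> 'a) \<Rightarrow> nat \<Rightarrow> nat \<Rightarrow> 'a set" where
  "clsA d I x = (\<lambda>i j. if inr d i j then cos (I i (d + 1)) (x i j) else {0})"

definition carrierA :: "nat \<Rightarrow> (nat \<Rightarrow> nat \<Rightarrow> 'a::{ring,monoid_mult} set) \<Rightarrow> (nat \<Rightarrow> nat \<Rightarrow> 'a set) set" where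
  "carrierA d I = {clsA d I x | x. \<forall>i j. inr d i j \<longrightarrow> x i j \<in> I i j}"

definition zeroA :: "nat \<Rightarrow> (nat \<Rightarrow> nat \<Rightarrow> 'a::{ring,monoid_mult} set) \<Rightarrow> nat \<Rightarrow> nat \<Rightarrow> 'a set" where
  "zeroA d I = clsA d I (\<lambda>i j. 0)"

definition addA :: "nat \<Rightarrow> (nat \<Rightarrow> nat \<Rightarrow> 'a::{ring,monoid_mult} set) \<Rightarrow> (nat \<Rightarrow> nat \<Rightarrow> 'a set) \<Rightarrow> (nat \<Rightarrow> nat \<Rightarrow> 'a set) \<Rightarrow> nat \<Rightarrow> nat \<Rightarrow> 'a set" where
  "addA d I a b = clsA d I (\<lambda>i j. rep (a i j) + rep (b i j))"

text \<open>(x + I_{i,d+1})(y + I_{k,d+1}) = delta_jk (xy + I_{i,d+1}), extended bilinearly.\<close>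
definition mulA :: "nat \<Rightarrow> (nat \<Rightarrow> nat \<Rightarrow> 'a::{ring,monoid_mult} set) \<Rightarrow> (nat \<Rightarrow> nat \<Rightarrow> 'a set) \<Rightarrow> (nat \<Rightarrow> nat \<Rightarrow> 'a set) \<Rightarrow> nat \<Rightarrow> nat \<Rightarrow> 'a set" where
  "mulA d I a b = clsA d I (\<lambda>i l. \<Sum>j\<in>{1..d}. rep (a i j) * rep (b j l))"

definition sumA :: "nat \<Rightarrow> (nat \<Rightarrow> nat \<Rightarrow> 'a::{ring,monoid_mult} set) \<Rightarrow> (nat \<Rightarrow> nat \<Rightarrow> 'a set) list \<Rightarrow> nat \<Rightarrow> nat \<Rightarrow> 'a set" where
  "sumA d I xs = foldr (addA d I) xs (zeroA d I)"

definition eA :: "nat \<Rightarrow> (nat \<Rightarrow> nat \<Rightarrow> 'a::{ring,monoid_mult} set) \<Rightarrow> nat \<Rightarrow> nat \<Rightarrow> nat \<Rightarrow> 'a set" where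
  "eA d I k = clsA d I (\<lambda>i j. if i = k \<and> j = k then 1 else 0)"

definition fA :: "nat \<Rightarrow> (nat \<Rightarrow> nat \<Rightarrow> 'a::{ring,monoid_mult} set) \<Rightarrow> nat \<Rightarrow> nat \<Rightarrow> nat \<Rightarrow> 'a set" where
  "fA d I j = sumA d I (map (eA d I) [Suc j..<Suc d])"

text \<open>J_j = A f_j A: all finite sums of products a f_j b.\<close>
definition JA :: "nat \<Rightarrow> (nat \<Rightarrow> nat \<Rightarrow> 'a::{ring,monoid_mult} set) \<Rightarrow> nat \<Rightarrow> (nat \<Rightarrow> nat \<Rightarrow> 'a set) set" where
  "JA d I j = {sumA d I (map (\<lambda>(a, b). mulA d I (mulA d I a (fA d I j)) b) ps) | ps.
                 set ps \<subseteq> carrierA d I \<times> carrierA d I}"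

subsection \<open>The left A-module T_l = direct sum over k of T_kl = R / I_{k,d+2-l}\<close>

definition clsT :: "nat \<Rightarrow> (nat \<Rightarrow> nat \<Rightarrow> 'a::{ring,monoid_mult} set) \<Rightarrow> nat \<Rightarrow> (nat \<Rightarrow> 'a) \<Rightarrow> nat \<Rightarrow> 'a set" where
  "clsT d I l y = (\<lambda>k. if 1 \<le> k \<and> k \<le> d then cos (I k (d + 2 - l)) (y k) else {0})"

definition carrierT :: "nat \<Rightarrow> (nat \<Rightarrow> nat \<Rightarrow> 'a::{ring,monoid_mult} set) \<Rightarrow> nat \<Rightarrow> (nat \<Rightarrow> 'a set) set" where
  "carrierT d I l = range (clsT d I l)"

definition addT :: "nat \<Rightarrow> (nat \<Rightarrow> nat \<Rightarrow> 'a::{ring,monoid_mult} set) \<Rightarrow> nat \<Rightarrow> (nat \<Rightarrow> 'a set) \<Rightarrow> (nat \<Rightarrow> 'a set) \<Rightarrow> nat \<Rightarrow> 'a set" where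
  "addT d I l s t = clsT d I l (\<lambda>k. rep (s k) + rep (t k))"

text \<open>(x + I_{i,d+1}) (r + I_{k,d+2-l}) = delta_jk (x r + I_{i,d+2-l}), extended bilinearly.\<close>
definition actT :: "nat \<Rightarrow> (nat \<Rightarrow> nat \<Rightarrow> 'a::{ring,monoid_mult} set) \<Rightarrow> nat \<Rightarrow> (nat \<Rightarrow> nat \<Rightarrow> 'a set) \<Rightarrow> (nat \<Rightarrow> 'a set) \<Rightarrow> nat \<Rightarrow> 'a set" where
  "actT d I l a t = clsT d I l (\<lambda>i. \<Sum>k\<in>{1..d}. rep (a i k) * rep (t k))"

definition Ae1 :: "nat \<Rightarrow> (nat \<Rightarrow> nat \<Rightarrow> 'a::{ring,monoid_mult} set) \<Rightarrow> (nat \<Rightarrow> nat \<Rightarrow> 'a set) set" where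
  "Ae1 d I = {mulA d I a (eA d I 1) | a. a \<in> carrierA d I}"

text \<open>A f_m A e_1 = J_m e_1 (finite sums of products a f_m b e_1).\<close>
definition subN :: "nat \<Rightarrow> (nat \<Rightarrow> nat \<Rightarrow> 'a::{ring,monoid_mult} set) \<Rightarrow> nat \<Rightarrow> (nat \<Rightarrow> nat \<Rightarrow> 'a set) set" where
  "subN d I m = {mulA d I x (eA d I 1) | x. x \<in> JA d I m}"

definition cosQ :: "nat \<Rightarrow> (nat \<Rightarrow> nat \<Rightarrow> 'a::{ring,monoid_mult} set) \<Rightarrow> nat \<Rightarrow> (nat \<Rightarrow> nat \<Rightarrow> 'a set) \<Rightarrow> (nat \<Rightarrow> nat \<Rightarrow> 'a set) set" where
  "cosQ d I m u = {addA d I u n | n. n \<in> subN d I m}"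

definition carrierQ :: "nat \<Rightarrow> (nat \<Rightarrow> nat \<Rightarrow> 'a::{ring,monoid_mult} set) \<Rightarrow> nat \<Rightarrow> (nat \<Rightarrow> nat \<Rightarrow> 'a set) set set" where
  "carrierQ d I m = cosQ d I m ` Ae1 d I"

definition addQ :: "nat \<Rightarrow> (nat \<Rightarrow> nat \<Rightarrow> 'a::{ring,monoid_mult} set) \<Rightarrow> nat \<Rightarrow> (nat \<Rightarrow> nat \<Rightarrow> 'a set) set \<Rightarrow> (nat \<Rightarrow> nat \<Rightarrow> 'a set) set \<Rightarrow> (nat \<Rightarrow> nat \<Rightarrow> 'a set) set" where
  "addQ d I m X Y = cosQ d I m (addA d I (rep X) (rep Y))"

definition actQ :: "nat \<Rightarrow> (nat \<Rightarrow> nat \<Rightarrow> 'a::{ring,monoid_mult} set) \<Rightarrow> nat \<Rightarrow> (nat \<Rightarrow> nat \<Rightarrow> 'a set) \<Rightarrow> (nat \<Rightarrow> nat \<Rightarrow> 'a set) set \<Rightarrow> (nat \<Rightarrow> nat \<Rightarrow> 'a set) set" where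
  "actQ d I m a X = cosQ d I m (mulA d I a (rep X))"

definition lmod_iso :: "'r set \<Rightarrow> 'm set \<Rightarrow> ('m \<Rightarrow> 'm \<Rightarrow> 'm) \<Rightarrow> ('r \<Rightarrow> 'm \<Rightarrow> 'm)
    \<Rightarrow> 'n set \<Rightarrow> ('n \<Rightarrow> 'n \<Rightarrow> 'n) \<Rightarrow> ('r \<Rightarrow> 'n \<Rightarrow> 'n) \<Rightarrow> ('m \<Rightarrow> 'n) \<Rightarrow> bool" where
  "lmod_iso Ar M addM actM N addN actN \<phi> \<longleftrightarrow>
     bij_betw \<phi> M N
   \<and> (\<forall>x\<in>M. \<forall>y\<in>M. \<phi> (addM x y) = addN (\<phi> x) (\<phi> y))
   \<and> (\<forall>a\<in>Ar. \<forall>x\<in>M. \<phi> (actM a x) = actN a (\<phi> x))"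

end

theory Submission imports Defs begin

text \<open>An element a e_1 of A e_1 is determined by the first column of a, and since
  I_{i,1} = R every column (y_i + I_{i,d+1})_i occurs. Right multiplication by f_m keeps
  exactly the columns of index > m, whose entries lie in I_{i,m+1}, and conversely every
  column with entries in I_{i,m+1} is obtained this way. So A f_m A e_1 consists of the
  columns with entries in I_{i,m+1}, and (A/J_m) e_1 is the module of columns with entries
  in R/I_{i,m+1}, acted on by matrix multiplication. For m = d + 1 - j this is T_j.\<close>

lemma ideal_zero: "two_sided_ideal J \<Longrightarrow> 0 \<in> J"
  by (simp add: two_sided_ideal_def)

lemma ideal_add: "two_sided_ideal J \<Longrightarrow> x \<in> J \<Longrightarrow> y \<in> J \<Longrightarrow> x + y \<in> J"
  by (simp add: two_sided_ideal_def)

lemma ideal_uminus: "two_sided_ideal J \<Longrightarrow> x \<in> J \<Longrightarrow> - x \<in> J"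
  by (simp add: two_sided_ideal_def)

lemma ideal_diff: "two_sided_ideal J \<Longrightarrow> x \<in> J \<Longrightarrow> y \<in> J \<Longrightarrow> x - y \<in> J"
  by (metis diff_conv_add_uminus ideal_add ideal_uminus)

lemma ideal_mult_right: "two_sided_ideal J \<Longrightarrow> x \<in> J \<Longrightarrow> x * r \<in> J"
  by (simp add: two_sided_ideal_def)

lemma ideal_Int: "two_sided_ideal J \<Longrightarrow> two_sided_ideal K \<Longrightarrow> two_sided_ideal (J \<inter> K)"
  unfolding two_sided_ideal_def by blast

lemma ideal_sum:
  assumes "two_sided_ideal J" "\<And>k. k \<in> K \<Longrightarrow> f k \<in> J"
  shows "sum f K \<in> J"
proof (cases "finite K")
  case True
  then show ?thesis using assms(2)
    by (induction K rule: finite_induct) (auto simp: ideal_zero[OF assms(1)] ideal_add[OF assms(1)])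
qed (simp add: ideal_zero[OF assms(1)])

lemma mem_cos_self: "two_sided_ideal S \<Longrightarrow> x \<in> cos S x"
  unfolding cos_def by (metis add_0_right ideal_zero image_eqI)

lemma cos_eq_iff:
  assumes S: "two_sided_ideal S"
  shows "cos S x = cos S y \<longleftrightarrow> x - y \<in> S"
proof
  assume "cos S x = cos S y"
  with mem_cos_self[OF S] obtain s where "s \<in> S" "x = y + s"
    unfolding cos_def by blast
  then show "x - y \<in> S" by simp
next
  assume xy: "x - y \<in> S"
  have "cos S u \<subseteq> cos S v" if "u - v \<in> S" for u v
  proof
    fix z assume "z \<in> cos S u"
    then obtain s where s: "s \<in> S" "z = u + s" unfolding cos_def by blast
    then have "z = v + ((u - v) + s)" by (simp add: algebra_simps)
    then show "z \<in> cos S v"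
      unfolding cos_def using ideal_add[OF S that s(1)] by (metis image_eqI)
  qed
  moreover have "y - x \<in> S"
    using ideal_uminus[OF S xy] by simp
  ultimately show "cos S x = cos S y" using xy by blast
qed

lemma rep_cos_diff: "two_sided_ideal S \<Longrightarrow> rep (cos S x) - x \<in> S"
  using someI[of "\<lambda>z. z \<in> cos S x", OF mem_cos_self] unfolding rep_def cos_def by force

definition colA :: "nat \<Rightarrow> (nat \<Rightarrow> nat \<Rightarrow> 'a::{ring,monoid_mult} set) \<Rightarrow> (nat \<Rightarrow> 'a) \<Rightarrow> nat \<Rightarrow> nat \<Rightarrow> 'a set" where
  "colA d I y = clsA d I (\<lambda>i k. if k = 1 then y i else 0)"

definition T_to_Q :: "nat \<Rightarrow> (nat \<Rightarrow> nat \<Rightarrow> 'a::{ring,monoid_mult} set) \<Rightarrow> nat \<Rightarrow> (nat \<Rightarrow> 'a set) \<Rightarrow> (nat \<Rightarrow> nat \<Rightarrow> 'a set) set" where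
  "T_to_Q d I m t = cosQ d I m (colA d I (\<lambda>i. rep (t i)))"

context
  fixes d :: nat and I :: "nat \<Rightarrow> nat \<Rightarrow> 'a::{ring,monoid_mult} set"
  assumes ds: "d_system d I"
begin

lemma d_system_ideal: "1 \<le> i \<Longrightarrow> i \<le> d + 1 \<Longrightarrow> 1 \<le> j \<Longrightarrow> j \<le> d + 1 \<Longrightarrow> two_sided_ideal (I i j)"
  using ds unfolding d_system_def by blast

lemma d_system_mult_mem:
  "1 \<le> i \<Longrightarrow> i \<le> d + 1 \<Longrightarrow> 1 \<le> j \<Longrightarrow> j \<le> d + 1 \<Longrightarrow> 1 \<le> k \<Longrightarrow> k \<le> d + 1 \<Longrightarrow>
   x \<in> I i j \<Longrightarrow> y \<in> I j k \<Longrightarrow> x * y \<in> I i k"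
  using ds unfolding d_system_def by blast

lemma d_system_UNIV: "1 \<le> j \<Longrightarrow> j \<le> i \<Longrightarrow> i \<le> d + 1 \<Longrightarrow> I i j = UNIV"
  using ds unfolding d_system_def by auto

lemma d_system_antimono:
  assumes "1 \<le> i" "i \<le> d + 1" "1 \<le> k'" "k' \<le> k" "k \<le> d + 1" "x \<in> I i k"
  shows "x \<in> I i k'"
proof -
  have "(1::'a) \<in> I k k'" using d_system_UNIV[of k' k] assms by simp
  then have "x * 1 \<in> I i k'" using d_system_mult_mem[of i k k' x 1] assms by simp
  then show ?thesis by simp
qed

lemma ideal_row: "inr d i j \<Longrightarrow> two_sided_ideal (I i (d + 1))"
  unfolding inr_def by (rule d_system_ideal) auto

lemma ideal_entry: "inr d i j \<Longrightarrow> two_sided_ideal (I i j)"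
  unfolding inr_def by (rule d_system_ideal) auto

lemma ideal_entry_Int: "inr d i j \<Longrightarrow> m \<le> d \<Longrightarrow> two_sided_ideal (I i j \<inter> I i (m + 1))"
  using ideal_Int[OF ideal_entry d_system_ideal[of i "m + 1"]] unfolding inr_def by auto

text \<open>Products x q are taken modulo I_{i,D} with D \<le> d + 1, so x may be replaced by any
  representative r modulo I_{i,d+1} and q by any representative p modulo I_{k,D}.\<close>
lemma mult_diff_mem:
  assumes "1 \<le> i" "i \<le> d" "1 \<le> k" "k \<le> d" "1 \<le> D" "D \<le> d + 1"
    and "x \<in> I i k" "r - x \<in> I i (d + 1)" "p - q \<in> I k D"
  shows "r * p - x * q \<in> I i D"
proof -
  have "(r - x) * p \<in> I i D"
    using d_system_antimono[of i D "d + 1"] ideal_mult_right[OF d_system_ideal[of i "d + 1"] assms(8)] assms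
    by simp
  moreover have "x * (p - q) \<in> I i D"
    using d_system_mult_mem[of i k D] assms by simp
  moreover have "r * p - x * q = (r - x) * p + x * (p - q)"
    by (simp add: algebra_simps)
  ultimately show ?thesis
    using ideal_add[OF d_system_ideal] assms by simp
qed

lemma clsA_eq_iff: "clsA d I x = clsA d I y \<longleftrightarrow> (\<forall>i j. inr d i j \<longrightarrow> x i j - y i j \<in> I i (d + 1))"
proof
  assume "clsA d I x = clsA d I y"
  then have "cos (I i (d + 1)) (x i j) = cos (I i (d + 1)) (y i j)" if "inr d i j" for i j
    using that fun_cong[OF fun_cong, of "clsA d I x" "clsA d I y" i j] unfolding clsA_def by simp
  then show "\<forall>i j. inr d i j \<longrightarrow> x i j - y i j \<in> I i (d + 1)"
    using cos_eq_iff[OF ideal_row] by blast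
next
  assume "\<forall>i j. inr d i j \<longrightarrow> x i j - y i j \<in> I i (d + 1)"
  then show "clsA d I x = clsA d I y"
    unfolding clsA_def using cos_eq_iff[OF ideal_row] by (intro ext) auto
qed

lemma clsA_eqI: "(\<And>i j. inr d i j \<Longrightarrow> x i j - y i j \<in> I i (d + 1)) \<Longrightarrow> clsA d I x = clsA d I y"
  using clsA_eq_iff by blast

lemma rep_clsA_diff: "inr d i j \<Longrightarrow> rep (clsA d I x i j) - x i j \<in> I i (d + 1)"
  unfolding clsA_def using rep_cos_diff[OF ideal_row] by simp

lemma addA_clsA: "addA d I (clsA d I x) (clsA d I y) = clsA d I (\<lambda>i j. x i j + y i j)"
  unfolding addA_def
proof (rule clsA_eqI)
  fix i j assume r: "inr d i j"
  have "rep (clsA d I x i j) + rep (clsA d I y i j) - (x i j + y i j)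
      = (rep (clsA d I x i j) - x i j) + (rep (clsA d I y i j) - y i j)"
    by (simp add: algebra_simps)
  also have "\<dots> \<in> I i (d + 1)"
    using ideal_add[OF ideal_row[OF r] rep_clsA_diff[OF r] rep_clsA_diff[OF r]] .
  finally show "rep (clsA d I x i j) + rep (clsA d I y i j) - (x i j + y i j) \<in> I i (d + 1)" .
qed

lemma mulA_clsA:
  assumes "\<And>i j. inr d i j \<Longrightarrow> x i j \<in> I i j"
  shows "mulA d I (clsA d I x) (clsA d I y) = clsA d I (\<lambda>i l. \<Sum>j\<in>{1..d}. x i j * y j l)"
  unfolding mulA_def
proof (rule clsA_eqI)
  fix i l assume r: "inr d i l"
  have "rep (clsA d I x i j) * rep (clsA d I y j l) - x i j * y j l \<in> I i (d + 1)"
    if "j \<in> {1..d}" for j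
  proof -
    have "inr d i j" "inr d j l" using r that unfolding inr_def by auto
    then show ?thesis
      using mult_diff_mem assms rep_clsA_diff unfolding inr_def by auto
  qed
  then show "(\<Sum>j\<in>{1..d}. rep (clsA d I x i j) * rep (clsA d I y j l)) - (\<Sum>j\<in>{1..d}. x i j * y j l)
      \<in> I i (d + 1)"
    unfolding sum_subtractf[symmetric] by (rule ideal_sum[OF ideal_row[OF r]])
qed

lemma colA_eq_iff: "colA d I y = colA d I y' \<longleftrightarrow> (\<forall>i\<in>{1..d}. y i - y' i \<in> I i (d + 1))"
  unfolding colA_def clsA_eq_iff
proof safe
  fix i
  assume "\<forall>i j. inr d i j \<longrightarrow> (if j = 1 then y i else 0) - (if j = 1 then y' i else 0) \<in> I i (d + 1)"
    and "i \<in> {1..d}"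
  moreover from \<open>i \<in> {1..d}\<close> have "inr d i 1" unfolding inr_def by auto
  ultimately show "y i - y' i \<in> I i (d + 1)" by force
next
  fix i j assume "\<forall>i\<in>{1..d}. y i - y' i \<in> I i (d + 1)" and r: "inr d i j"
  then show "(if j = 1 then y i else 0) - (if j = 1 then y' i else 0) \<in> I i (d + 1)"
    using ideal_zero[OF ideal_row[OF r]] unfolding inr_def by auto
qed

lemma colA_entry_mem: "inr d i j \<Longrightarrow> (if j = 1 then y i else 0) \<in> I i j"
  using d_system_UNIV[of 1 i] ideal_zero[OF ideal_entry] unfolding inr_def by auto

lemma colA_mem_carrierA: "colA d I y \<in> carrierA d I"
  unfolding carrierA_def colA_def using colA_entry_mem by blast

lemma addA_colA: "addA d I (colA d I y) (colA d I z) = colA d I (\<lambda>i. y i + z i)"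
  unfolding colA_def addA_clsA by (intro arg_cong[where f="clsA d I"] ext) simp

lemma mulA_colA:
  assumes "\<And>i j. inr d i j \<Longrightarrow> x i j \<in> I i j"
  shows "mulA d I (clsA d I x) (colA d I y) = colA d I (\<lambda>i. \<Sum>k\<in>{1..d}. x i k * y k)"
proof -
  have "mulA d I (clsA d I x) (colA d I y)
      = clsA d I (\<lambda>i l. \<Sum>k\<in>{1..d}. x i k * (if l = 1 then y k else 0))"
    unfolding colA_def by (rule mulA_clsA[OF assms])
  also have "\<dots> = colA d I (\<lambda>i. \<Sum>k\<in>{1..d}. x i k * y k)"
    unfolding colA_def by (intro arg_cong[where f="clsA d I"] ext) simp
  finally show ?thesis .
qed

lemma mulA_eA1:
  assumes "\<And>i j. inr d i j \<Longrightarrow> x i j \<in> I i j" "1 \<le> d"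
  shows "mulA d I (clsA d I x) (eA d I 1) = colA d I (\<lambda>i. x i 1)"
proof -
  have "mulA d I (clsA d I x) (eA d I 1)
      = clsA d I (\<lambda>i l. \<Sum>j\<in>{1..d}. x i j * (if j = 1 \<and> l = 1 then 1 else 0))"
    unfolding eA_def by (rule mulA_clsA[OF assms(1)])
  also have "\<dots> = colA d I (\<lambda>i. x i 1)"
    unfolding colA_def
  proof (intro arg_cong[where f="clsA d I"] ext)
    fix i l
    have "(\<Sum>j\<in>{1..d}. x i j * (if j = 1 \<and> l = 1 then 1 else 0))
        = (\<Sum>j\<in>{1..d}. if j = 1 then (if l = 1 then x i 1 else 0) else 0)"
      by (rule sum.cong) auto
    then show "(\<Sum>j\<in>{1..d}. x i j * (if j = 1 \<and> l = 1 then 1 else 0)) = (if l = 1 then x i 1 else 0)"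
      using assms(2) by simp
  qed
  finally show ?thesis .
qed

lemma mulA_colA_eA1:
  assumes "1 \<le> d"
  shows "mulA d I (colA d I y) (eA d I 1) = colA d I y"
proof -
  have "mulA d I (clsA d I (\<lambda>i k. if k = 1 then y i else 0)) (eA d I 1)
      = colA d I (\<lambda>i. if (1::nat) = 1 then y i else 0)"
    by (rule mulA_eA1[OF colA_entry_mem assms])
  then show ?thesis unfolding colA_def by (simp only: simp_thms if_True)
qed

lemma Ae1_eq_range_colA:
  assumes "1 \<le> d"
  shows "Ae1 d I = range (colA d I)"
proof
  show "Ae1 d I \<subseteq> range (colA d I)"
  proof
    fix u assume "u \<in> Ae1 d I"
    then obtain x where "u = mulA d I (clsA d I x) (eA d I 1)" "\<And>i j. inr d i j \<Longrightarrow> x i j \<in> I i j"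
      unfolding Ae1_def carrierA_def by blast
    then show "u \<in> range (colA d I)" using mulA_eA1 assms by simp
  qed
  show "range (colA d I) \<subseteq> Ae1 d I"
  proof
    fix u assume "u \<in> range (colA d I)"
    then obtain y where "u = colA d I y" by blast
    then have "u = mulA d I (colA d I y) (eA d I 1) \<and> colA d I y \<in> carrierA d I"
      using mulA_colA_eA1[OF assms] colA_mem_carrierA by simp
    then show "u \<in> Ae1 d I" unfolding Ae1_def by blast
  qed
qed

subsection \<open>The submodule A f_m A e_1\<close>

lemma sumA_map_eA:
  "distinct ks \<Longrightarrow> sumA d I (map (eA d I) ks) = clsA d I (\<lambda>i j. if i = j \<and> i \<in> set ks then 1 else 0)"
proof (induction ks)
  case Nil
  show ?case unfolding sumA_def zeroA_def by simp
next
  case (Cons k ks)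
  have "sumA d I (map (eA d I) (k # ks)) = addA d I (eA d I k) (sumA d I (map (eA d I) ks))"
    unfolding sumA_def by simp
  also have "\<dots> = clsA d I (\<lambda>i j. (if i = k \<and> j = k then 1 else 0) + (if i = j \<and> i \<in> set ks then 1 else 0))"
    using Cons unfolding eA_def by (simp add: addA_clsA)
  also have "\<dots> = clsA d I (\<lambda>i j. if i = j \<and> i \<in> set (k # ks) then 1 else 0)"
    using Cons.prems by (intro arg_cong[where f="clsA d I"] ext) auto
  finally show ?case .
qed

lemma fA_eq_clsA: "fA d I m = clsA d I (\<lambda>i j. if i = j \<and> m < i then 1 else 0)"
  unfolding fA_def sumA_map_eA[OF distinct_upt]
proof (rule clsA_eqI)
  fix i j assume r: "inr d i j"
  then have "(i \<in> set [Suc m..<Suc d]) = (m < i)" unfolding inr_def by auto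
  then show "(if i = j \<and> i \<in> set [Suc m..<Suc d] then 1 else 0) - (if i = j \<and> m < i then 1 else 0) \<in> I i (d + 1)"
    using ideal_zero[OF ideal_row[OF r]] by simp
qed

lemma mulA_fA:
  assumes "\<And>i j. inr d i j \<Longrightarrow> x i j \<in> I i j"
  shows "mulA d I (clsA d I x) (fA d I m) = clsA d I (\<lambda>i l. if m < l then x i l else 0)"
proof -
  have "mulA d I (clsA d I x) (fA d I m)
      = clsA d I (\<lambda>i l. \<Sum>j\<in>{1..d}. x i j * (if j = l \<and> m < j then 1 else 0))"
    unfolding fA_eq_clsA by (rule mulA_clsA[OF assms])
  also have "\<dots> = clsA d I (\<lambda>i l. if m < l then x i l else 0)"
  proof (rule clsA_eqI)
    fix i l assume r: "inr d i l"
    have "(\<Sum>j\<in>{1..d}. x i j * (if j = l \<and> m < j then 1 else 0))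
        = (\<Sum>j\<in>{1..d}. if j = l then (if m < l then x i l else 0) else 0)"
      by (rule sum.cong) auto
    also have "\<dots> = (if m < l then x i l else 0)"
      using r unfolding inr_def by simp
    finally show "(\<Sum>j\<in>{1..d}. x i j * (if j = l \<and> m < j then 1 else 0)) - (if m < l then x i l else 0)
        \<in> I i (d + 1)"
      using ideal_zero[OF ideal_row[OF r]] by simp
  qed
  finally show ?thesis .
qed

text \<open>Only the columns k > m of x survive, and x i k \<in> I i k \<subseteq> I i (m+1) for those.\<close>
lemma mulA_fA_mulA_entries:
  assumes x: "\<And>i j. inr d i j \<Longrightarrow> x i j \<in> I i j" and y: "\<And>i j. inr d i j \<Longrightarrow> y i j \<in> I i j"
    and "m \<le> d"
  obtains w where "mulA d I (mulA d I (clsA d I x) (fA d I m)) (clsA d I y) = clsA d I w"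
    and "\<And>i l. inr d i l \<Longrightarrow> w i l \<in> I i l \<inter> I i (m + 1)"
proof
  let ?x = "\<lambda>i k. if m < k then x i k else 0"
  have x': "?x i k \<in> I i k" if "inr d i k" for i k
    using x[OF that] ideal_zero[OF ideal_entry[OF that]] by simp
  show "mulA d I (mulA d I (clsA d I x) (fA d I m)) (clsA d I y)
      = clsA d I (\<lambda>i l. \<Sum>k\<in>{1..d}. ?x i k * y k l)"
    using mulA_fA[OF x] mulA_clsA[OF x'] by simp
  fix i l assume r: "inr d i l"
  note ideals = ideal_entry_Int[OF r \<open>m \<le> d\<close>]
  have "?x i k * y k l \<in> I i l \<inter> I i (m + 1)" if k: "k \<in> {1..d}" for k
  proof (cases "m < k")
    case True
    have "x i k \<in> I i (m + 1)"
      using d_system_antimono[of i "m + 1" k] x r k True unfolding inr_def by auto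
    then show ?thesis
      using True ideal_mult_right[OF d_system_ideal[of i "m + 1"]] d_system_mult_mem[of i k l] x y r k
        \<open>m \<le> d\<close> unfolding inr_def by auto
  qed (use ideal_zero[OF ideals] in simp)
  then show "(\<Sum>k\<in>{1..d}. ?x i k * y k l) \<in> I i l \<inter> I i (m + 1)"
    by (rule ideal_sum[OF ideals])
qed

lemma JA_elem_entries:
  assumes "u \<in> JA d I m" "m \<le> d"
  obtains z where "u = clsA d I z" "\<And>i l. inr d i l \<Longrightarrow> z i l \<in> I i l \<inter> I i (m + 1)"
proof -
  from assms(1) obtain ps where u: "u = sumA d I (map (\<lambda>(a, b). mulA d I (mulA d I a (fA d I m)) b) ps)"
    and ps: "set ps \<subseteq> carrierA d I \<times> carrierA d I"
    unfolding JA_def by blast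
  have "\<exists>z. sumA d I (map (\<lambda>(a, b). mulA d I (mulA d I a (fA d I m)) b) ps) = clsA d I z
      \<and> (\<forall>i l. inr d i l \<longrightarrow> z i l \<in> I i l \<inter> I i (m + 1))"
    using ps
  proof (induction ps)
    case Nil
    have "sumA d I [] = clsA d I (\<lambda>i l. 0)" unfolding sumA_def zeroA_def by simp
    then show ?case
      using ideal_zero[OF ideal_entry_Int[OF _ assms(2)]] by auto
  next
    case (Cons p ps)
    obtain x y where p: "p = (clsA d I x, clsA d I y)"
      and x: "\<And>i j. inr d i j \<Longrightarrow> x i j \<in> I i j" and y: "\<And>i j. inr d i j \<Longrightarrow> y i j \<in> I i j"
      using Cons.prems unfolding carrierA_def by fastforce
    obtain w where w: "mulA d I (mulA d I (clsA d I x) (fA d I m)) (clsA d I y) = clsA d I w"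
      "\<And>i l. inr d i l \<Longrightarrow> w i l \<in> I i l \<inter> I i (m + 1)"
      using mulA_fA_mulA_entries[OF x y assms(2)] by blast
    obtain z where z: "sumA d I (map (\<lambda>(a, b). mulA d I (mulA d I a (fA d I m)) b) ps) = clsA d I z"
      "\<forall>i l. inr d i l \<longrightarrow> z i l \<in> I i l \<inter> I i (m + 1)"
      using Cons by auto
    have "sumA d I (map (\<lambda>(a, b). mulA d I (mulA d I a (fA d I m)) b) (p # ps))
        = clsA d I (\<lambda>i l. w i l + z i l)"
      using w(1) z(1) p addA_clsA unfolding sumA_def by simp
    then show ?case
      using ideal_add[OF ideal_entry_Int[OF _ assms(2)] w(2)] z(2) by blast
  qed
  then show thesis using that u by blast
qed

text \<open>A column y with y i \<in> I i (m+1) factors as (y e_{1,m+1}) f_m e_{m+1,1}, using I_{m+1,1} = R.\<close>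
lemma colA_mem_JA:
  assumes "m \<le> d" "\<forall>i\<in>{1..d}. y i \<in> I i (m + 1)"
  shows "colA d I y \<in> JA d I m"
proof (cases "m = d")
  case True
  have "zeroA d I \<in> JA d I m"
    unfolding JA_def by (intro CollectI exI[of _ "[]"]) (simp add: sumA_def)
  moreover have "colA d I y = zeroA d I"
  proof -
    have "colA d I y = colA d I (\<lambda>i. 0)" using assms(2) True by (simp add: colA_eq_iff)
    also have "\<dots> = zeroA d I" unfolding colA_def zeroA_def by simp
    finally show ?thesis .
  qed
  ultimately show ?thesis by simp
next
  case False
  then have md: "m + 1 \<le> d" using assms(1) by simp
  define x where "x = (\<lambda>i k. if k = m + 1 then y i else (0::'a))"
  define e where "e = (\<lambda>k (l::nat). if k = m + 1 \<and> l = 1 then 1 else (0::'a))"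
  have x: "x i j \<in> I i j" if "inr d i j" for i j
    unfolding x_def using assms(2) ideal_zero[OF ideal_entry[OF that]] that unfolding inr_def by auto
  have e: "e i j \<in> I i j" if "inr d i j" for i j
    unfolding e_def using d_system_UNIV[of 1 "m + 1"] md ideal_zero[OF ideal_entry[OF that]] by auto
  have "(\<lambda>i l. if m < l then x i l else 0) = x"
    unfolding x_def by (intro ext) auto
  then have "mulA d I (clsA d I x) (fA d I m) = clsA d I x"
    using mulA_fA[OF x] by simp
  moreover have "(\<lambda>i l. \<Sum>k\<in>{1..d}. x i k * e k l) = (\<lambda>i l. if l = 1 then y i else 0)"
  proof (intro ext)
    fix i l
    have "(\<Sum>k\<in>{1..d}. x i k * e k l) = (\<Sum>k\<in>{1..d}. if k = m + 1 then (if l = 1 then y i else 0) else 0)"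
      unfolding x_def e_def by (rule sum.cong) auto
    also have "\<dots> = (if l = 1 then y i else 0)" using md by simp
    finally show "(\<Sum>k\<in>{1..d}. x i k * e k l) = (if l = 1 then y i else 0)" .
  qed
  then have "mulA d I (clsA d I x) (clsA d I e) = colA d I y"
    using mulA_clsA[OF x] unfolding colA_def by simp
  moreover have "addA d I (colA d I y) (zeroA d I) = colA d I y"
    unfolding zeroA_def colA_def addA_clsA by simp
  moreover have "clsA d I x \<in> carrierA d I" "clsA d I e \<in> carrierA d I"
    unfolding carrierA_def using x e by blast+
  ultimately show ?thesis
    unfolding JA_def by (intro CollectI exI[of _ "[(clsA d I x, clsA d I e)]"]) (simp add: sumA_def)
qed

lemma subN_eq_colA:
  assumes "m \<le> d" "1 \<le> d"
  shows "subN d I m = {colA d I y | y. \<forall>i\<in>{1..d}. y i \<in> I i (m + 1)}"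
proof
  show "subN d I m \<subseteq> {colA d I y | y. \<forall>i\<in>{1..d}. y i \<in> I i (m + 1)}"
  proof
    fix u assume "u \<in> subN d I m"
    then obtain v where u: "u = mulA d I v (eA d I 1)" and v: "v \<in> JA d I m"
      unfolding subN_def by blast
    obtain z where z: "v = clsA d I z" "\<And>i l. inr d i l \<Longrightarrow> z i l \<in> I i l \<inter> I i (m + 1)"
      using JA_elem_entries[OF v assms(1)] by blast
    have "u = colA d I (\<lambda>i. z i 1)"
      unfolding u z(1) by (rule mulA_eA1) (use z(2) assms(2) in auto)
    moreover have "\<forall>i\<in>{1..d}. z i 1 \<in> I i (m + 1)"
      using z(2) assms(2) unfolding inr_def by auto
    ultimately show "u \<in> {colA d I y | y. \<forall>i\<in>{1..d}. y i \<in> I i (m + 1)}" by blast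
  qed
  show "{colA d I y | y. \<forall>i\<in>{1..d}. y i \<in> I i (m + 1)} \<subseteq> subN d I m"
  proof
    fix u assume "u \<in> {colA d I y | y. \<forall>i\<in>{1..d}. y i \<in> I i (m + 1)}"
    then obtain y where "u = mulA d I (colA d I y) (eA d I 1)" "colA d I y \<in> JA d I m"
      using colA_mem_JA[OF assms(1)] mulA_colA_eA1[OF assms(2)] by force
    then show "u \<in> subN d I m"
      unfolding subN_def by blast
  qed
qed

subsection \<open>The quotient (A/J_m) e_1 as columns modulo I_{i,m+1}\<close>

lemma cosQ_colA:
  assumes "m \<le> d" "1 \<le> d"
  shows "cosQ d I m (colA d I y) = {colA d I z | z. \<forall>i\<in>{1..d}. z i - y i \<in> I i (m + 1)}"
proof
  show "cosQ d I m (colA d I y) \<subseteq> {colA d I z | z. \<forall>i\<in>{1..d}. z i - y i \<in> I i (m + 1)}"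
  proof
    fix u assume "u \<in> cosQ d I m (colA d I y)"
    then obtain w where "u = addA d I (colA d I y) (colA d I w)" "\<forall>i\<in>{1..d}. w i \<in> I i (m + 1)"
      unfolding cosQ_def subN_eq_colA[OF assms] by blast
    then show "u \<in> {colA d I z | z. \<forall>i\<in>{1..d}. z i - y i \<in> I i (m + 1)}"
      unfolding addA_colA by force
  qed
  show "{colA d I z | z. \<forall>i\<in>{1..d}. z i - y i \<in> I i (m + 1)} \<subseteq> cosQ d I m (colA d I y)"
  proof
    fix u assume "u \<in> {colA d I z | z. \<forall>i\<in>{1..d}. z i - y i \<in> I i (m + 1)}"
    then obtain z where z: "u = colA d I z" "\<forall>i\<in>{1..d}. z i - y i \<in> I i (m + 1)" by blast
    have "u = addA d I (colA d I y) (colA d I (\<lambda>i. z i - y i))"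
      unfolding addA_colA z(1) by simp
    moreover have "colA d I (\<lambda>i. z i - y i) \<in> subN d I m"
      unfolding subN_eq_colA[OF assms] using z(2) by blast
    ultimately show "u \<in> cosQ d I m (colA d I y)" unfolding cosQ_def by blast
  qed
qed

lemma colA_mem_cosQ_colA:
  assumes "m \<le> d" "1 \<le> d"
  shows "colA d I y \<in> cosQ d I m (colA d I y)"
proof -
  have "\<forall>i\<in>{1..d}. y i - y i \<in> I i (m + 1)"
    using ideal_zero[OF d_system_ideal[of _ "m + 1"]] assms(1) by simp
  then show ?thesis unfolding cosQ_colA[OF assms] by blast
qed

lemma cosQ_colA_eq_iff:
  assumes "m \<le> d" "1 \<le> d"
  shows "cosQ d I m (colA d I y) = cosQ d I m (colA d I y') \<longleftrightarrow> (\<forall>i\<in>{1..d}. y i - y' i \<in> I i (m + 1))"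
proof
  assume "cosQ d I m (colA d I y) = cosQ d I m (colA d I y')"
  then obtain z where z: "colA d I y = colA d I z" "\<forall>i\<in>{1..d}. z i - y' i \<in> I i (m + 1)"
    using colA_mem_cosQ_colA[OF assms, of y] unfolding cosQ_colA[OF assms] by blast
  show "\<forall>i\<in>{1..d}. y i - y' i \<in> I i (m + 1)"
  proof
    fix i assume i: "i \<in> {1..d}"
    have ideal: "two_sided_ideal (I i (m + 1))" using i assms d_system_ideal by auto
    have "y i - z i \<in> I i (d + 1)" using z(1) i unfolding colA_eq_iff by blast
    then have "y i - z i \<in> I i (m + 1)"
      using d_system_antimono[of i "m + 1" "d + 1"] i assms by auto
    moreover have "z i - y' i \<in> I i (m + 1)" using z(2) i by blast
    ultimately show "y i - y' i \<in> I i (m + 1)"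
      using ideal_add[OF ideal] by fastforce
  qed
next
  assume yy': "\<forall>i\<in>{1..d}. y i - y' i \<in> I i (m + 1)"
  have "z i - y i \<in> I i (m + 1) \<longleftrightarrow> z i - y' i \<in> I i (m + 1)" if i: "i \<in> {1..d}" for z i
  proof
    have ideal: "two_sided_ideal (I i (m + 1))" using i assms d_system_ideal by auto
    have yy'i: "y i - y' i \<in> I i (m + 1)" using yy' i by blast
    show "z i - y' i \<in> I i (m + 1)" if "z i - y i \<in> I i (m + 1)"
      using ideal_add[OF ideal that yy'i] by simp
    show "z i - y i \<in> I i (m + 1)" if "z i - y' i \<in> I i (m + 1)"
      using ideal_diff[OF ideal that yy'i] by simp
  qed
  then show "cosQ d I m (colA d I y) = cosQ d I m (colA d I y')"
    unfolding cosQ_colA[OF assms] by blast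
qed

lemma rep_cosQ_colA:
  assumes "m \<le> d" "1 \<le> d"
  obtains z where "rep (cosQ d I m (colA d I y)) = colA d I z" "\<forall>i\<in>{1..d}. z i - y i \<in> I i (m + 1)"
proof -
  have "rep (cosQ d I m (colA d I y)) \<in> cosQ d I m (colA d I y)"
    unfolding rep_def by (rule someI[where P="\<lambda>u. u \<in> cosQ d I m (colA d I y)", OF colA_mem_cosQ_colA[OF assms]])
  then show thesis using that unfolding cosQ_colA[OF assms] by blast
qed

lemma addQ_cosQ_colA:
  assumes "m \<le> d" "1 \<le> d"
  shows "addQ d I m (cosQ d I m (colA d I y)) (cosQ d I m (colA d I z)) = cosQ d I m (colA d I (\<lambda>i. y i + z i))"
proof -
  obtain y' where y': "rep (cosQ d I m (colA d I y)) = colA d I y'" "\<forall>i\<in>{1..d}. y' i - y i \<in> I i (m + 1)"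
    using rep_cosQ_colA[OF assms] .
  obtain z' where z': "rep (cosQ d I m (colA d I z)) = colA d I z'" "\<forall>i\<in>{1..d}. z' i - z i \<in> I i (m + 1)"
    using rep_cosQ_colA[OF assms] .
  have "(y' i + z' i) - (y i + z i) \<in> I i (m + 1)" if i: "i \<in> {1..d}" for i
  proof -
    have "(y' i + z' i) - (y i + z i) = (y' i - y i) + (z' i - z i)" by (simp add: algebra_simps)
    also have "\<dots> \<in> I i (m + 1)"
      using ideal_add[OF d_system_ideal[of i "m + 1"]] y'(2) z'(2) i assms by auto
    finally show ?thesis .
  qed
  then show ?thesis
    unfolding addQ_def y'(1) z'(1) addA_colA cosQ_colA_eq_iff[OF assms] by blast
qed

lemma actQ_cosQ_colA:
  assumes "m \<le> d" "1 \<le> d" and x: "\<And>i j. inr d i j \<Longrightarrow> x i j \<in> I i j"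
  shows "actQ d I m (clsA d I x) (cosQ d I m (colA d I y))
       = cosQ d I m (colA d I (\<lambda>i. \<Sum>k\<in>{1..d}. x i k * y k))"
proof -
  obtain y' where y': "rep (cosQ d I m (colA d I y)) = colA d I y'" "\<forall>i\<in>{1..d}. y' i - y i \<in> I i (m + 1)"
    using rep_cosQ_colA[OF assms(1,2)] .
  have "(\<Sum>k\<in>{1..d}. x i k * y' k) - (\<Sum>k\<in>{1..d}. x i k * y k) \<in> I i (m + 1)"
    if i: "i \<in> {1..d}" for i
    unfolding sum_subtractf[symmetric] right_diff_distrib[symmetric]
  proof (rule ideal_sum[OF d_system_ideal])
    fix k assume k: "k \<in> {1..d}"
    then have "inr d i k" using i unfolding inr_def by auto
    then show "x i k * (y' k - y k) \<in> I i (m + 1)"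
      using d_system_mult_mem[of i k "m + 1"] x y'(2) i k assms(1) unfolding inr_def by auto
  qed (use i assms(1) in auto)
  then have "cosQ d I m (colA d I (\<lambda>i. \<Sum>k\<in>{1..d}. x i k * y' k))
      = cosQ d I m (colA d I (\<lambda>i. \<Sum>k\<in>{1..d}. x i k * y k))"
    unfolding cosQ_colA_eq_iff[OF assms(1,2)] by blast
  then show ?thesis
    using mulA_colA[OF x] unfolding actQ_def y'(1) by simp
qed

lemma clsT_eq_iff:
  assumes "1 \<le> l" "l \<le> d + 1"
  shows "clsT d I l y = clsT d I l y' \<longleftrightarrow> (\<forall>i\<in>{1..d}. y i - y' i \<in> I i (d + 2 - l))"
proof -
  have ideal: "two_sided_ideal (I i (d + 2 - l))" if "i \<in> {1..d}" for i
    using that assms d_system_ideal by auto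
  have "clsT d I l y = clsT d I l y' \<longleftrightarrow> (\<forall>i\<in>{1..d}. clsT d I l y i = clsT d I l y' i)"
    unfolding clsT_def by (auto simp: fun_eq_iff)
  also have "\<dots> \<longleftrightarrow> (\<forall>i\<in>{1..d}. y i - y' i \<in> I i (d + 2 - l))"
    unfolding clsT_def using cos_eq_iff[OF ideal] by auto
  finally show ?thesis .
qed

lemma rep_clsT_diff:
  assumes "1 \<le> l" "l \<le> d + 1" "i \<in> {1..d}"
  shows "rep (clsT d I l y i) - y i \<in> I i (d + 2 - l)"
  unfolding clsT_def using assms rep_cos_diff[OF d_system_ideal[of i "d + 2 - l"]] by auto

lemma addT_clsT:
  assumes "1 \<le> l" "l \<le> d + 1"
  shows "addT d I l (clsT d I l y) (clsT d I l z) = clsT d I l (\<lambda>i. y i + z i)"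
  unfolding addT_def clsT_eq_iff[OF assms]
proof
  fix i assume i: "i \<in> {1..d}"
  have "rep (clsT d I l y i) + rep (clsT d I l z i) - (y i + z i)
      = (rep (clsT d I l y i) - y i) + (rep (clsT d I l z i) - z i)"
    by (simp add: algebra_simps)
  also have "\<dots> \<in> I i (d + 2 - l)"
    using ideal_add[OF d_system_ideal[of i "d + 2 - l"] rep_clsT_diff[OF assms i] rep_clsT_diff[OF assms i]]
      i assms by auto
  finally show "rep (clsT d I l y i) + rep (clsT d I l z i) - (y i + z i) \<in> I i (d + 2 - l)" .
qed

lemma actT_clsT:
  assumes "1 \<le> l" "l \<le> d + 1" and x: "\<And>i j. inr d i j \<Longrightarrow> x i j \<in> I i j"
  shows "actT d I l (clsA d I x) (clsT d I l y) = clsT d I l (\<lambda>i. \<Sum>k\<in>{1..d}. x i k * y k)"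
  unfolding actT_def clsT_eq_iff[OF assms(1,2)]
proof
  fix i assume i: "i \<in> {1..d}"
  have "rep (clsA d I x i k) * rep (clsT d I l y k) - x i k * y k \<in> I i (d + 2 - l)"
    if k: "k \<in> {1..d}" for k
  proof -
    have ik: "inr d i k" using i k unfolding inr_def by auto
    show ?thesis
      by (rule mult_diff_mem[OF _ _ _ _ _ _ x[OF ik] rep_clsA_diff[OF ik, of x] rep_clsT_diff[OF assms(1,2) k, of y]])
        (use i k assms(1,2) in auto)
  qed
  then show "(\<Sum>k\<in>{1..d}. rep (clsA d I x i k) * rep (clsT d I l y k)) - (\<Sum>k\<in>{1..d}. x i k * y k)
      \<in> I i (d + 2 - l)"
    unfolding sum_subtractf[symmetric] using i assms by (intro ideal_sum[OF d_system_ideal]) auto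
qed

lemma T_to_Q_clsT:
  assumes "1 \<le> l" "l \<le> d" "m = d + 1 - l"
  shows "T_to_Q d I m (clsT d I l y) = cosQ d I m (colA d I y)"
proof -
  have "m \<le> d" "1 \<le> d" "d + 2 - l = m + 1" using assms by auto
  then show ?thesis
    unfolding T_to_Q_def cosQ_colA_eq_iff[OF \<open>m \<le> d\<close> \<open>1 \<le> d\<close>]
    using rep_clsT_diff[of l _ y] assms by auto
qed

lemma bij_betw_T_to_Q:
  assumes "1 \<le> l" "l \<le> d" "m = d + 1 - l"
  shows "bij_betw (T_to_Q d I m) (carrierT d I l) (carrierQ d I m)"
proof -
  have m: "m \<le> d" "1 \<le> d" "d + 2 - l = m + 1" using assms by auto
  have "inj_on (T_to_Q d I m) (carrierT d I l)"
  proof (rule inj_onI)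
    fix s t assume "s \<in> carrierT d I l" "t \<in> carrierT d I l" and "T_to_Q d I m s = T_to_Q d I m t"
    then show "s = t"
      unfolding carrierT_def using T_to_Q_clsT[OF assms] cosQ_colA_eq_iff[OF m(1,2)]
        clsT_eq_iff[of l] assms m(3) by auto
  qed
  moreover have "T_to_Q d I m ` carrierT d I l = carrierQ d I m"
    unfolding carrierT_def carrierQ_def Ae1_eq_range_colA[OF m(2)] image_image T_to_Q_clsT[OF assms] ..
  ultimately show ?thesis unfolding bij_betw_def ..
qed

lemma T_to_Q_addT:
  assumes "1 \<le> l" "l \<le> d" "m = d + 1 - l" and "s \<in> carrierT d I l" "t \<in> carrierT d I l"
  shows "T_to_Q d I m (addT d I l s t) = addQ d I m (T_to_Q d I m s) (T_to_Q d I m t)"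
proof -
  obtain y z where "s = clsT d I l y" "t = clsT d I l z"
    using assms(4,5) unfolding carrierT_def by blast
  moreover have "m \<le> d" "1 \<le> d" "l \<le> d + 1" using assms by auto
  ultimately show ?thesis
    using addT_clsT T_to_Q_clsT[OF assms(1-3)] addQ_cosQ_colA assms(1) by simp
qed

lemma T_to_Q_actT:
  assumes "1 \<le> l" "l \<le> d" "m = d + 1 - l" and "a \<in> carrierA d I" "t \<in> carrierT d I l"
  shows "T_to_Q d I m (actT d I l a t) = actQ d I m a (T_to_Q d I m t)"
proof -
  obtain x where x: "a = clsA d I x" "\<And>i j. inr d i j \<Longrightarrow> x i j \<in> I i j"
    using assms(4) unfolding carrierA_def by blast
  obtain y where "t = clsT d I l y"
    using assms(5) unfolding carrierT_def by blast
  moreover have "m \<le> d" "1 \<le> d" "l \<le> d + 1" using assms by auto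
  ultimately show ?thesis
    using actT_clsT[OF assms(1) _ x(2)] T_to_Q_clsT[OF assms(1-3)] actQ_cosQ_colA[OF _ _ x(2)] x(1) by simp
qed

end

theorem lemma4p3:
  fixes d j :: nat and I :: "nat \<Rightarrow> nat \<Rightarrow> 'a::{ring,monoid_mult} set"
  assumes "d_system d I" and "1 \<le> j" and "j \<le> d"
  shows "\<exists>\<phi>. lmod_iso (carrierA d I) (carrierT d I j) (addT d I j) (actT d I j)
              (carrierQ d I (d + 1 - j)) (addQ d I (d + 1 - j)) (actQ d I (d + 1 - j)) \<phi>"
  unfolding lmod_iso_def
  using bij_betw_T_to_Q[OF assms refl] T_to_Q_addT[OF assms refl] T_to_Q_actT[OF assms refl] by blast

end
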